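(* Let $\ell\ge 3$ be an odd integer, let $k=\binom{\ell}{(\ell-1)/2}$, and let $n>k$. Define \[ \mathcal{J}=\{S\subseteq[\ell]: |S|\le \tfrac{\ell-1}{2}\},\quad \mathcal{K}=\{S\cup\{\ell+1,\dots,\ell+t\}: 1\le t\le n-\ell,\ S\subseteq[\ell],\ |S|=\tfrac{\ell-1}{2}\}, \] \[ \mathcal{L}=\{S\cup\{\ell+1,\dots,n\}: S\subseteq[\ell],\ |S|\ge \tfrac{\ell+1}{2}\}. \] Then $\mathcal{F}=\mathcal{J}\cup\mathcal{K}\cup\mathcal{L}$ is induced-$\mathcal{A}_{k+1}$-saturated in $\mathcal{B}_n$, and $|\mathcal{F}|=2^\ell+(n-\ell)k$. Consequently $\mathrm{isat}(n,\mathcal{A}_{k+1})\le 2^\ell+(n-\ell)k$.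
   Context: $\mathcal{B}_n$ denotes the Boolean lattice $(2^{[n]},\subseteq)$, $[n]=\{1,\dots,n\}$. A poset $\mathcal{P}'$ is an induced subposet of $\mathcal{P}$ if there is an injection $f$ with $u\le' v\iff f(u)\le f(v)$. A family $\mathcal{F}\subseteq 2^{[n]}$ (ordered by inclusion) is induced-$\mathcal{P}$-saturated if it contains no induced copy of $\mathcal{P}$ but every strictly larger family $\mathcal{F}'\subseteq 2^{[n]}$ does. $\mathrm{isat}(n,\mathcal{P})$ is the minimum size of such a family. $\mathcal{A}_m$ is the $m$-element antichain. *)

theory Defs
  imports Main
begin

definition has_induced_copy :: "'a set \<Rightarrow> ('a \<Rightarrow> 'a \<Rightarrow> bool) \<Rightarrow> 'b set set \<Rightarrow> bool" where
  "has_induced_copy P le F \<longleftrightarrow>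
     (\<exists>f. inj_on f P \<and> f ` P \<subseteq> F \<and> (\<forall>u\<in>P. \<forall>v\<in>P. le u v \<longleftrightarrow> f u \<subseteq> f v))"

definition antichain_carrier :: "nat \<Rightarrow> nat set" where
  "antichain_carrier m = {..<m}"

definition antichain_le :: "nat \<Rightarrow> nat \<Rightarrow> bool" where
  "antichain_le u v \<longleftrightarrow> u = v"

definition induced_saturated :: "nat \<Rightarrow> 'a set \<Rightarrow> ('a \<Rightarrow> 'a \<Rightarrow> bool) \<Rightarrow> nat set set \<Rightarrow> bool" where
  "induced_saturated n P le F \<longleftrightarrow>
     F \<subseteq> Pow {1..n} \<and> \<not> has_induced_copy P le F \<and>
     (\<forall>F'. F \<subset> F' \<and> F' \<subseteq> Pow {1..n} \<longrightarrow> has_induced_copy P le F')"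

definition isat :: "nat \<Rightarrow> 'a set \<Rightarrow> ('a \<Rightarrow> 'a \<Rightarrow> bool) \<Rightarrow> nat" where
  "isat n P le = (LEAST s. \<exists>F. induced_saturated n P le F \<and> card F = s)"

end

theory Submission
  imports Defs Complex_Main
begin

text \<open>Write each member of the family as \<open>S \<union> {l+1..l+t}\<close> with \<open>S \<subseteq> {1..l}\<close>. The run length
  \<open>t\<close> is \<open>0\<close> below the middle layer \<open>m = (l-1)/2\<close> of \<open>{1..l}\<close> and \<open>n - l\<close> above it, so two
  members with comparable traces \<open>S\<close> are comparable. An antichain in the family therefore maps
  injectively onto an antichain of traces, and Sperner's theorem (via the LYM inequality) bounds
  it by \<open>k\<close>. Conversely, every shifted middle layer \<open>{S \<union> {l+1..l+t} | |S| = m}\<close> is an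
  antichain of size \<open>k\<close> in the family, and a set \<open>X\<close> outside the family is incomparable to all
  of one of them: if \<open>X - {1..l}\<close> is a run \<open>{l+1..l+r}\<close>, membership fails because
  \<open>|X \<inter> {1..l}| < m\<close> with \<open>r > 0\<close> (take \<open>t = 0\<close>) or \<open>|X \<inter> {1..l}| > m\<close> with \<open>r < n - l\<close>
  (take \<open>t = n - l\<close>); otherwise \<open>X\<close> has a gap \<open>a \<notin> X\<close> below some \<open>b \<in> X\<close>, and \<open>t = a - l\<close>
  works.\<close>

definition antichain :: "'a set set \<Rightarrow> bool" where
  "antichain A \<longleftrightarrow> (\<forall>X\<in>A. \<forall>Y\<in>A. X \<subseteq> Y \<longrightarrow> X = Y)"

lemma antichain_insert:
  "antichain A \<Longrightarrow> (\<forall>Y\<in>A. \<not> X \<subseteq> Y \<and> \<not> Y \<subseteq> X) \<Longrightarrow> antichain (insert X A)"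
  unfolding antichain_def by blast

lemma antichain_remove_point:
  assumes "antichain A"
  shows "antichain ((\<lambda>X. X - {x}) ` {X\<in>A. x \<in> X})"
  unfolding antichain_def
proof (intro ballI impI)
  fix X' Y' assume "X' \<in> (\<lambda>X. X - {x}) ` {X\<in>A. x \<in> X}" "Y' \<in> (\<lambda>X. X - {x}) ` {X\<in>A. x \<in> X}"
    and sub: "X' \<subseteq> Y'"
  then obtain X Y where "X \<in> A" "Y \<in> A" "x \<in> X" "x \<in> Y" "X' = X - {x}" "Y' = Y - {x}"
    by blast
  moreover from this sub have "X \<subseteq> Y" by blast
  ultimately show "X' = Y'" using assms unfolding antichain_def by blast
qed

lemma binomial_absorption_divide:
  assumes "0 < j" "j \<le> Suc n"
  shows "real j / real (n choose (j - 1)) = real (Suc n) / real (Suc n choose j)"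
proof -
  obtain i where "j = Suc i" using assms(1) gr0_conv_Suc by blast
  then have "real j * real (Suc n choose j) = real (Suc n) * real (n choose (j - 1))"
    using binomial_absorption[of i "Suc n"] by (metis diff_Suc_1 of_nat_mult)
  moreover have "0 < n choose (j - 1)" "0 < Suc n choose j" using assms by simp_all
  ultimately show ?thesis by (simp add: field_simps)
qed

theorem lym_inequality:
  assumes "finite U" "A \<subseteq> Pow U" "antichain A"
  shows "(\<Sum>X\<in>A. 1 / real (card U choose card X)) \<le> 1"
  using assms
proof (induction "card U" arbitrary: U A)
  case 0
  then have "A \<subseteq> {{}}" by auto
  then show ?case by (auto simp: subset_singleton_iff)
next
  case (Suc n)
  have "finite A" using Suc.prems by (meson finite_Pow_iff rev_finite_subset)
  show ?case
  proof (cases "{} \<in> A")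
    case True
    then have "A = {{}}" using Suc.prems(3) unfolding antichain_def by blast
    then show ?thesis by simp
  next
    case False
    text \<open>Double counting: for \<open>x \<in> U\<close>, the members of \<open>A\<close> through \<open>x\<close> with \<open>x\<close> removed
      form an antichain in \<open>U - {x}\<close>; summing the induction hypothesis over all \<open>x\<close>
      counts each \<open>X \<in> A\<close> exactly \<open>card X\<close> times.\<close>
    define f where "f X = 1 / real (n choose (card X - 1))" for X :: "'a set"
    have containing_le_1: "(\<Sum>X\<in>{X\<in>A. x \<in> X}. f X) \<le> 1" if "x \<in> U" for x
    proof -
      let ?B = "(\<lambda>X. X - {x}) ` {X\<in>A. x \<in> X}"
      have "inj_on (\<lambda>X. X - {x}) {X\<in>A. x \<in> X}" by (rule inj_onI) blast
      moreover have "card (X - {x}) = card X - 1" if "X \<in> A" "x \<in> X" for X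
        using that Suc.prems(1,2) by (meson PowD card_Diff_singleton finite_subset subsetD)
      ultimately have "(\<Sum>X\<in>{X\<in>A. x \<in> X}. f X) = (\<Sum>Y\<in>?B. 1 / real (n choose card Y))"
        unfolding f_def by (subst sum.reindex) auto
      also have "\<dots> \<le> 1"
      proof -
        have "card (U - {x}) = n" using Suc.hyps(2) Suc.prems(1) that by simp
        moreover have "(\<Sum>Y\<in>?B. 1 / real (card (U - {x}) choose card Y)) \<le> 1"
        proof (rule Suc.hyps(1))
          show "n = card (U - {x})" using \<open>card (U - {x}) = n\<close> ..
          show "?B \<subseteq> Pow (U - {x})" using Suc.prems(2) by blast
        qed (use Suc.prems(1,3) antichain_remove_point in auto)
        ultimately show ?thesis by simp
      qed
      finally show ?thesis .
    qed
    have weight: "real (card X) * f X = real (Suc n) * (1 / real (Suc n choose card X))"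
      if "X \<in> A" for X
    proof -
      have "finite X" "X \<noteq> {}" "card X \<le> Suc n"
        using that False Suc.prems Suc.hyps(2) by (auto intro: finite_subset card_mono)
      then show ?thesis
        using binomial_absorption_divide[of "card X" n] by (simp add: f_def card_gt_0_iff)
    qed
    have "real (Suc n) * (\<Sum>X\<in>A. 1 / real (Suc n choose card X)) = (\<Sum>X\<in>A. real (card X) * f X)"
      by (simp add: sum_distrib_left weight)
    also have "\<dots> = (\<Sum>X\<in>A. \<Sum>x\<in>{x\<in>U. x \<in> X}. f X)"
    proof (rule sum.cong)
      fix X assume "X \<in> A"
      then have "{x\<in>U. x \<in> X} = X" using Suc.prems(2) by blast
      then show "real (card X) * f X = (\<Sum>x\<in>{x\<in>U. x \<in> X}. f X)" by simp
    qed simp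
    also have "\<dots> = (\<Sum>x\<in>U. \<Sum>X\<in>{X\<in>A. x \<in> X}. f X)"
      by (rule sum.swap_restrict[OF Suc.prems(1) \<open>finite A\<close>, symmetric])
    also have "\<dots> \<le> real (Suc n)"
      using sum_mono[of U _ "\<lambda>_. 1", OF containing_le_1] Suc.hyps(2) by simp
    finally show ?thesis using Suc.hyps(2) by simp
  qed
qed

theorem sperner:
  assumes "finite U" "A \<subseteq> Pow U" "antichain A"
  shows "card A \<le> card U choose (card U div 2)"
proof -
  let ?c = "card U choose (card U div 2)"
  have "real (card A) / real ?c = (\<Sum>X\<in>A. 1 / real ?c)" by simp
  also have "\<dots> \<le> (\<Sum>X\<in>A. 1 / real (card U choose card X))"
  proof (rule sum_mono)
    fix X assume "X \<in> A"
    then have "0 < card U choose card X"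
      using assms(1,2) by (simp add: card_mono subset_iff)
    then show "1 / real ?c \<le> 1 / real (card U choose card X)"
      using binomial_maximum[of "card U" "card X"] by (simp add: frac_le)
  qed
  also have "\<dots> \<le> 1" using lym_inequality[OF assms] .
  finally show ?thesis by (simp add: divide_le_eq)
qed

lemma has_induced_copy_antichain_iff:
  "has_induced_copy (antichain_carrier m) antichain_le G \<longleftrightarrow>
   (\<exists>B\<subseteq>G. finite B \<and> card B = m \<and> antichain B)"
proof
  assume "has_induced_copy (antichain_carrier m) antichain_le G"
  then obtain f where f: "inj_on f {..<m}" "f ` {..<m} \<subseteq> G"
    and order: "\<forall>u\<in>{..<m}. \<forall>v\<in>{..<m}. u = v \<longleftrightarrow> f u \<subseteq> f v"
    unfolding has_induced_copy_def antichain_carrier_def antichain_le_def by blast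
  have "antichain (f ` {..<m})"
    unfolding antichain_def by (metis (no_types, lifting) image_iff order)
  moreover have "card (f ` {..<m}) = m" using f(1) by (simp add: card_image)
  ultimately show "\<exists>B\<subseteq>G. finite B \<and> card B = m \<and> antichain B"
    using f(2) by blast
next
  assume "\<exists>B\<subseteq>G. finite B \<and> card B = m \<and> antichain B"
  then obtain B where B: "B \<subseteq> G" "finite B" "card B = m" "antichain B" by blast
  have "\<exists>f. bij_betw f {..<m} B"
    using ex_bij_betw_nat_finite[OF B(2)] unfolding B(3) atLeast0LessThan .
  then obtain f where f: "inj_on f {..<m}" "f ` {..<m} = B" unfolding bij_betw_def by blast
  have "u = v" if "u \<in> {..<m}" "v \<in> {..<m}" "f u \<subseteq> f v" for u v
  proof -
    have "f u = f v" using B(4) f(2) that unfolding antichain_def by blast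
    then show "u = v" using f(1) that(1,2) by (simp add: inj_on_eq_iff)
  qed
  then have "\<forall>u\<in>{..<m}. \<forall>v\<in>{..<m}. u = v \<longleftrightarrow> f u \<subseteq> f v" by blast
  with f B(1) show "has_induced_copy (antichain_carrier m) antichain_le G"
    unfolding has_induced_copy_def antichain_carrier_def antichain_le_def by blast
qed

lemma card_antichain_le_if_comparable_traces:
  assumes "antichain B" "finite U" "tr ` B \<subseteq> Pow U"
    and comparable: "\<And>X Y. X \<in> B \<Longrightarrow> Y \<in> B \<Longrightarrow> tr X \<subseteq> tr Y \<Longrightarrow> X \<subseteq> Y \<or> Y \<subseteq> X"
  shows "card B \<le> card U choose (card U div 2)"
proof -
  have eq_if_traces_le: "X = Y" if "X \<in> B" "Y \<in> B" "tr X \<subseteq> tr Y" for X Y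
    using comparable[OF that] assms(1) that(1,2) unfolding antichain_def by blast
  then have "inj_on tr B" by (intro inj_onI) auto
  moreover have "antichain (tr ` B)" unfolding antichain_def using eq_if_traces_le by blast
  ultimately show ?thesis using sperner[OF assms(2,3)] by (simp add: card_image)
qed

lemma Un_block_Int_prefix:
  fixes l t :: nat
  shows "S \<subseteq> {1..l} \<Longrightarrow> (S \<union> {l+1..l+t}) \<inter> {1..l} = S"
  by auto

lemma Un_block_subset_Un_block_iff:
  fixes l t u :: nat
  assumes "S \<subseteq> {1..l}" "T \<subseteq> {1..l}"
  shows "S \<union> {l+1..l+t} \<subseteq> T \<union> {l+1..l+u} \<longleftrightarrow> S \<subseteq> T \<and> t \<le> u"
proof
  assume sub: "S \<union> {l+1..l+t} \<subseteq> T \<union> {l+1..l+u}"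
  then have "S \<subseteq> (T \<union> {l+1..l+u}) \<inter> {1..l}" using assms(1) by blast
  then have "S \<subseteq> T" by force
  moreover have "t \<le> u"
  proof (rule ccontr)
    assume "\<not> t \<le> u"
    then have "l + t \<in> S \<union> {l+1..l+t}" by simp
    then have "l + t \<in> T \<union> {l+1..l+u}" using sub by blast
    with \<open>\<not> t \<le> u\<close> assms(2) show False by auto
  qed
  ultimately show "S \<subseteq> T \<and> t \<le> u" ..
next
  assume "S \<subseteq> T \<and> t \<le> u"
  then show "S \<union> {l+1..l+t} \<subseteq> T \<union> {l+1..l+u}" by (intro Un_mono) auto
qed

lemma Un_block_eq_Un_block_iff:
  fixes l t u :: nat
  assumes "S \<subseteq> {1..l}" "T \<subseteq> {1..l}"
  shows "S \<union> {l+1..l+t} = T \<union> {l+1..l+u} \<longleftrightarrow> S = T \<and> t = u"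
  unfolding set_eq_subset Un_block_subset_Un_block_iff[OF assms]
    Un_block_subset_Un_block_iff[OF assms(2,1)] by auto

text \<open>For \<open>m = (l-1)/2\<close> this is the family \<open>J \<union> K \<union> L\<close> of the theorem (\<open>layered_family_eq_Un\<close>).\<close>
definition layered_family :: "nat \<Rightarrow> nat \<Rightarrow> nat \<Rightarrow> nat set set" where
  "layered_family l m n =
     {S \<union> {l+1..l+t} | S t. S \<subseteq> {1..l} \<and> t \<le> n - l \<and>
        (card S < m \<longrightarrow> t = 0) \<and> (m < card S \<longrightarrow> t = n - l)}"

definition level_family :: "nat \<Rightarrow> nat \<Rightarrow> nat \<Rightarrow> nat set set" where
  "level_family l m t = (\<lambda>S. S \<union> {l+1..l+t}) ` {S. S \<subseteq> {1..l} \<and> card S = m}"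

lemma mem_level_familyE:
  assumes "Y \<in> level_family l m t"
  obtains T where "Y = T \<union> {l+1..l+t}" "T \<subseteq> {1..l}" "card T = m"
  using assms unfolding level_family_def by blast

lemma Un_block_mem_layered_family:
  "S \<subseteq> {1..l} \<Longrightarrow> t \<le> n - l \<Longrightarrow> (card S < m \<longrightarrow> t = 0) \<Longrightarrow> (m < card S \<longrightarrow> t = n - l) \<Longrightarrow>
   S \<union> {l+1..l+t} \<in> layered_family l m n"
  unfolding layered_family_def by blast

lemma layered_family_subset_Pow: "l \<le> n \<Longrightarrow> layered_family l m n \<subseteq> Pow {1..n}"
  unfolding layered_family_def by auto

lemma layered_family_comparable_traces:
  assumes "X \<in> layered_family l m n" "Y \<in> layered_family l m n"
    and "X \<inter> {1..l} \<subseteq> Y \<inter> {1..l}"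
  shows "X \<subseteq> Y \<or> Y \<subseteq> X"
proof -
  obtain S t where X: "X = S \<union> {l+1..l+t}" "S \<subseteq> {1..l}" "t \<le> n - l" "card S < m \<longrightarrow> t = 0"
    using assms(1) unfolding layered_family_def by blast
  obtain T u where Y: "Y = T \<union> {l+1..l+u}" "T \<subseteq> {1..l}" "u \<le> n - l" "m < card T \<longrightarrow> u = n - l"
    using assms(2) unfolding layered_family_def by blast
  have "S \<subseteq> T" using assms(3) unfolding X(1) Y(1) Un_block_Int_prefix[OF X(2)] Un_block_Int_prefix[OF Y(2)] .
  show ?thesis
  proof (cases "t \<le> u")
    case True
    then show ?thesis using Un_block_subset_Un_block_iff[OF X(2) Y(2)] \<open>S \<subseteq> T\<close> X(1) Y(1) by blast
  next
    case False
    have "S = T"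
    proof (rule ccontr)
      assume "S \<noteq> T"
      then have "card S < card T"
        using \<open>S \<subseteq> T\<close> Y(2) by (meson finite_atLeastAtMost finite_subset psubsetI psubset_card_mono)
      moreover have "m \<le> card S" using X(4) False by auto
      ultimately show False using X(3) Y(3,4) False by auto
    qed
    then show ?thesis using Un_block_subset_Un_block_iff[OF Y(2) X(2)] False X(1) Y(1) by simp
  qed
qed

lemma card_antichain_in_layered_family:
  assumes "antichain B" "B \<subseteq> layered_family l m n"
  shows "card B \<le> l choose (l div 2)"
proof -
  have "card B \<le> card {1..l} choose (card {1..l} div 2)"
  proof (rule card_antichain_le_if_comparable_traces[where tr = "\<lambda>X. X \<inter> {1..l}"])
    fix X Y assume "X \<in> B" "Y \<in> B" "X \<inter> {1..l} \<subseteq> Y \<inter> {1..l}"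
    then show "X \<subseteq> Y \<or> Y \<subseteq> X" using assms(2) layered_family_comparable_traces by blast
  qed (use assms(1) in auto)
  then show ?thesis by simp
qed

lemma level_family_subset_layered_family:
  "t \<le> n - l \<Longrightarrow> level_family l m t \<subseteq> layered_family l m n"
  unfolding level_family_def layered_family_def by auto

lemma antichain_level_family: "antichain (level_family l m t)"
  unfolding antichain_def
proof (intro ballI impI)
  fix X Y assume X: "X \<in> level_family l m t" and Y: "Y \<in> level_family l m t" and sub: "X \<subseteq> Y"
  obtain S where S: "X = S \<union> {l+1..l+t}" "S \<subseteq> {1..l}" "card S = m"
    by (rule mem_level_familyE[OF X])
  obtain T where T: "Y = T \<union> {l+1..l+t}" "T \<subseteq> {1..l}" "card T = m"
    by (rule mem_level_familyE[OF Y])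
  have "S \<subseteq> T" using sub Un_block_subset_Un_block_iff[OF S(2) T(2)] S(1) T(1) by blast
  moreover have "finite T" using T(2) finite_subset by blast
  ultimately have "S = T" using S(3) T(3) card_subset_eq by metis
  then show "X = Y" using S(1) T(1) by simp
qed

lemma card_level_family: "card (level_family l m t) = l choose m"
proof -
  have "inj_on (\<lambda>S. S \<union> {l+1..l+t}) {S. S \<subseteq> {1..l} \<and> card S = m}"
  proof (rule inj_onI)
    fix S T assume "S \<in> {S. S \<subseteq> {1..l} \<and> card S = m}" "T \<in> {S. S \<subseteq> {1..l} \<and> card S = m}"
      and "S \<union> {l+1..l+t} = T \<union> {l+1..l+t}"
    then show "S = T" using Un_block_eq_Un_block_iff by blast
  qed
  then show ?thesis unfolding level_family_def by (simp add: card_image n_subsets)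
qed

lemma initial_segment_or_gap:
  fixes R :: "nat set"
  assumes "finite R" "R \<subseteq> {l<..}"
  obtains r where "R = {l+1..l+r}"
    | a b where "l < a" "a < b" "a \<notin> R" "b \<in> R"
proof (cases "\<exists>a b. l < a \<and> a < b \<and> a \<notin> R \<and> b \<in> R")
  case True
  then show thesis using that(2) by blast
next
  case no_gap: False
  show thesis
  proof (cases "R = {}")
    case True
    then show thesis using that(1)[of 0] by simp
  next
    case False
    have "Max R \<in> R" using assms(1) False by simp
    then have "l < Max R" using assms(2) by auto
    have "R = {l+1..Max R}"
    proof
      show "R \<subseteq> {l+1..Max R}" using assms(2) Max_ge[OF assms(1)] by fastforce
      show "{l+1..Max R} \<subseteq> R"
      proof
        fix x assume x: "x \<in> {l+1..Max R}"
        show "x \<in> R"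
        proof (cases "x = Max R")
          case True
          with \<open>Max R \<in> R\<close> show ?thesis by simp
        next
          case False
          with x have "l < x" "x < Max R" by auto
          with no_gap \<open>Max R \<in> R\<close> show ?thesis by blast
        qed
      qed
    qed
    then show thesis using that(1)[of "Max R - l"] \<open>l < Max R\<close> by simp
  qed
qed

lemma level_family_incomparable_below:
  assumes "S \<subseteq> {1..l}" "card S < m" "0 < r" "Y \<in> level_family l m 0"
  shows "\<not> S \<union> {l+1..l+r} \<subseteq> Y \<and> \<not> Y \<subseteq> S \<union> {l+1..l+r}"
proof -
  obtain T where T: "Y = T \<union> {l+1..l+0}" "T \<subseteq> {1..l}" "card T = m"
    by (rule mem_level_familyE[OF assms(4)])
  have "finite S" using assms(1) finite_subset by blast
  then have "\<not> T \<subseteq> S" using assms(2) T(3) by (metis card_mono not_le)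
  moreover have "S \<union> {l+1..l+r} \<subseteq> Y \<longleftrightarrow> S \<subseteq> T \<and> r \<le> 0"
    unfolding T(1) by (rule Un_block_subset_Un_block_iff[OF assms(1) T(2)])
  moreover have "Y \<subseteq> S \<union> {l+1..l+r} \<longleftrightarrow> T \<subseteq> S \<and> 0 \<le> r"
    unfolding T(1) by (rule Un_block_subset_Un_block_iff[OF T(2) assms(1)])
  ultimately show ?thesis using assms(3) by simp
qed

lemma level_family_incomparable_above:
  assumes "S \<subseteq> {1..l}" "m < card S" "r < n - l" "Y \<in> level_family l m (n - l)"
  shows "\<not> S \<union> {l+1..l+r} \<subseteq> Y \<and> \<not> Y \<subseteq> S \<union> {l+1..l+r}"
proof -
  obtain T where T: "Y = T \<union> {l+1..l+(n-l)}" "T \<subseteq> {1..l}" "card T = m"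
    by (rule mem_level_familyE[OF assms(4)])
  have "finite T" using T(2) finite_subset by blast
  then have "\<not> S \<subseteq> T" using assms(2) T(3) by (metis card_mono not_le)
  moreover have "S \<union> {l+1..l+r} \<subseteq> Y \<longleftrightarrow> S \<subseteq> T \<and> r \<le> n - l"
    unfolding T(1) by (rule Un_block_subset_Un_block_iff[OF assms(1) T(2)])
  moreover have "Y \<subseteq> S \<union> {l+1..l+r} \<longleftrightarrow> T \<subseteq> S \<and> n - l \<le> r"
    unfolding T(1) by (rule Un_block_subset_Un_block_iff[OF T(2) assms(1)])
  ultimately show ?thesis using assms(3) by auto
qed

lemma level_family_incomparable_gap:
  assumes "l < a" "a < b" "a \<notin> X" "b \<in> X" "Y \<in> level_family l m (a - l)"
  shows "\<not> X \<subseteq> Y \<and> \<not> Y \<subseteq> X"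
proof -
  obtain T where T: "Y = T \<union> {l+1..l+(a-l)}" "T \<subseteq> {1..l}"
    by (rule mem_level_familyE[OF assms(5)])
  have "l + (a - l) = a" using assms(1) by simp
  then have "a \<in> Y" "b \<notin> Y" using T assms(1,2) by auto
  then show ?thesis using assms(3,4) by blast
qed

lemma exists_level_family_incomparable:
  assumes "l < n" "X \<subseteq> {1..n}" "X \<notin> layered_family l m n"
  shows "\<exists>t\<le>n - l. \<forall>Y\<in>level_family l m t. \<not> X \<subseteq> Y \<and> \<not> Y \<subseteq> X"
proof -
  define S where "S = X \<inter> {1..l}"
  have S: "S \<subseteq> {1..l}" "X = S \<union> (X - {1..l})" unfolding S_def by auto
  have "finite (X - {1..l})" "X - {1..l} \<subseteq> {l<..}"
    using assms(2) finite_subset by auto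
  then show ?thesis
  proof (cases rule: initial_segment_or_gap)
    case (1 r)
    then have X: "X = S \<union> {l+1..l+r}" using S(2) by simp
    have "r \<le> n - l"
    proof (cases "r = 0")
      case False
      then have "l + r \<in> X" using X by simp
      then have "l + r \<le> n" using assms(2) by auto
      then show ?thesis by simp
    qed simp
    have "\<not> ((card S < m \<longrightarrow> r = 0) \<and> (m < card S \<longrightarrow> r = n - l))"
    proof
      assume "(card S < m \<longrightarrow> r = 0) \<and> (m < card S \<longrightarrow> r = n - l)"
      then have "X \<in> layered_family l m n"
        unfolding X by (intro Un_block_mem_layered_family S(1) \<open>r \<le> n - l\<close>) auto
      with assms(3) show False by contradiction
    qed
    then consider "card S < m" "0 < r" | "m < card S" "r < n - l"
      using \<open>r \<le> n - l\<close> by fastforce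
    then show ?thesis
    proof cases
      case 1
      then show ?thesis
        using level_family_incomparable_below[OF S(1)] unfolding X by (intro exI[of _ 0]) simp
    next
      case 2
      then show ?thesis
        using level_family_incomparable_above[OF S(1)] unfolding X by (intro exI[of _ "n - l"]) simp
    qed
  next
    case (2 a b)
    then have "b \<in> X" "a \<notin> X" by auto
    then have "a - l \<le> n - l" using assms(2) \<open>a < b\<close> by auto
    then show ?thesis
      using level_family_incomparable_gap[OF \<open>l < a\<close> \<open>a < b\<close> \<open>a \<notin> X\<close> \<open>b \<in> X\<close>]
      by (intro exI[of _ "a - l"]) simp
  qed
qed

theorem layered_family_induced_saturated:
  assumes "l < n"
  shows "induced_saturated n (antichain_carrier ((l choose (l div 2)) + 1)) antichain_le
           (layered_family l (l div 2) n)"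
  unfolding induced_saturated_def has_induced_copy_antichain_iff
proof (intro conjI allI impI)
  let ?F = "layered_family l (l div 2) n"
  show "?F \<subseteq> Pow {1..n}" using assms layered_family_subset_Pow[of l n] by simp
  show "\<not> (\<exists>B\<subseteq>?F. finite B \<and> card B = (l choose (l div 2)) + 1 \<and> antichain B)"
  proof
    assume "\<exists>B\<subseteq>?F. finite B \<and> card B = (l choose (l div 2)) + 1 \<and> antichain B"
    then obtain B where "B \<subseteq> ?F" "card B = (l choose (l div 2)) + 1" "antichain B" by blast
    then show False using card_antichain_in_layered_family[of B l "l div 2" n] by simp
  qed
  fix F' assume F': "?F \<subset> F' \<and> F' \<subseteq> Pow {1..n}"
  then obtain X where X: "X \<in> F'" "X \<notin> ?F" "X \<subseteq> {1..n}" by blast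
  then obtain t where t: "t \<le> n - l" "\<forall>Y\<in>level_family l (l div 2) t. \<not> X \<subseteq> Y \<and> \<not> Y \<subseteq> X"
    using exists_level_family_incomparable[OF assms] by blast
  let ?B = "insert X (level_family l (l div 2) t)"
  have "level_family l (l div 2) t \<subseteq> ?F" by (rule level_family_subset_layered_family[OF t(1)])
  then have "?B \<subseteq> F'" "X \<notin> level_family l (l div 2) t" using F' X by auto
  moreover have "finite (level_family l (l div 2) t)"
    using card_level_family[of l "l div 2" t] by (intro card_ge_0_finite) simp
  ultimately show "\<exists>B\<subseteq>F'. finite B \<and> card B = (l choose (l div 2)) + 1 \<and> antichain B"
    using card_level_family antichain_insert[OF antichain_level_family t(2)]
    by (intro exI[of _ ?B]) simp
qed

theorem card_layered_family:
  assumes "l \<le> n"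
  shows "card (layered_family l m n) = 2 ^ l + (n - l) * (l choose m)"
proof -
  define P where "P = {(S, t). S \<subseteq> {1..l} \<and> t \<le> n - l \<and>
                          (card S < m \<longrightarrow> t = 0) \<and> (m < card S \<longrightarrow> t = n - l)}"
  define g where "g S = (if card S \<le> m then 0 else n - l)" for S :: "nat set"
  let ?join = "\<lambda>(S, t). S \<union> {l+1..l+t}"
  let ?L = "{S. S \<subseteq> {1..l} \<and> card S = m}"
  have family: "layered_family l m n = ?join ` P"
    unfolding layered_family_def P_def by auto
  have "inj_on ?join P"
  proof (rule inj_onI)
    fix p q assume "p \<in> P" "q \<in> P" "?join p = ?join q"
    then show "p = q" unfolding P_def using Un_block_eq_Un_block_iff by auto
  qed
  then have "card (layered_family l m n) = card P" unfolding family by (rule card_image)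
  txt \<open>Every trace \<open>S\<close> admits the length \<open>g S\<close>; traces in layer \<open>m\<close> also admit \<open>1..n - l\<close>.\<close>
  also have "P = (\<lambda>S. (S, g S)) ` Pow {1..l} \<union> ?L \<times> {1..n - l}"
    unfolding P_def g_def by auto
  also have "card \<dots> = card ((\<lambda>S. (S, g S)) ` Pow {1..l}) + card (?L \<times> {1..n - l})"
    by (rule card_Un_disjoint) (auto simp: g_def)
  also have "\<dots> = 2 ^ l + (n - l) * (l choose m)"
    by (simp add: card_image inj_on_convol_ident card_Pow card_cartesian_product n_subsets)
  finally show ?thesis .
qed

lemma layered_family_eq_Un:
  assumes "l < n"
  shows "layered_family l m n =
           {S. S \<subseteq> {1..l} \<and> card S \<le> m}
         \<union> {S \<union> {l+1..l+t} | S t. 1 \<le> t \<and> t \<le> n - l \<and> S \<subseteq> {1..l} \<and> card S = m}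
         \<union> {S \<union> {l+1..n} | S. S \<subseteq> {1..l} \<and> card S \<ge> m + 1}"
    (is "_ = ?J \<union> ?K \<union> ?L")
proof (intro equalityI subsetI)
  fix X assume "X \<in> layered_family l m n"
  then obtain S t where X: "X = S \<union> {l+1..l+t}" "S \<subseteq> {1..l}" "t \<le> n - l"
    "card S < m \<longrightarrow> t = 0" "m < card S \<longrightarrow> t = n - l"
    unfolding layered_family_def by blast
  consider "t = 0" "card S \<le> m" | "0 < t" "card S = m" | "m < card S"
    using X(4) by linarith
  then show "X \<in> ?J \<union> ?K \<union> ?L"
  proof cases
    case 1
    then show ?thesis using X(1,2) by simp
  next
    case 2
    then have "1 \<le> t" by simp
    then have "X \<in> ?K" using X(1-3) 2(2) by (intro CollectI exI[of _ S] exI[of _ t]) simp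
    then show ?thesis by blast
  next
    case 3
    then have "X = S \<union> {l+1..n}" using X(1,5) assms by simp
    then have "X \<in> ?L" using X(2) 3 by (intro CollectI exI[of _ S]) simp
    then show ?thesis by blast
  qed
next
  fix X assume "X \<in> ?J \<union> ?K \<union> ?L"
  then consider S where "X = S \<union> {l+1..l+0}" "S \<subseteq> {1..l}" "card S \<le> m"
    | S t where "X = S \<union> {l+1..l+t}" "1 \<le> t" "t \<le> n - l" "S \<subseteq> {1..l}" "card S = m"
    | S where "X = S \<union> {l+1..l+(n-l)}" "S \<subseteq> {1..l}" "m + 1 \<le> card S"
    using assms by auto
  then show "X \<in> layered_family l m n"
  proof cases
    case (1 S)
    show ?thesis unfolding 1(1) by (rule Un_block_mem_layered_family) (use 1 in auto)
  next
    case (2 S t)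
    show ?thesis unfolding 2(1) by (rule Un_block_mem_layered_family) (use 2 in auto)
  next
    case (3 S)
    show ?thesis unfolding 3(1) by (rule Un_block_mem_layered_family) (use 3 in auto)
  qed
qed

lemma isat_le_card: "induced_saturated n P le F \<Longrightarrow> isat n P le \<le> card F"
  unfolding isat_def by (intro Least_le) blast

theorem mainTheorem2:
  fixes l n :: nat
  assumes "odd l" and "l \<ge> 3" and "n > l choose ((l - 1) div 2)"
  defines "k \<equiv> l choose ((l - 1) div 2)"
  defines "J \<equiv> {S. S \<subseteq> {1..l} \<and> card S \<le> (l - 1) div 2}"
  defines "K \<equiv> {S \<union> {l+1..l+t} | S t. 1 \<le> t \<and> t \<le> n - l \<and> S \<subseteq> {1..l} \<and> card S = (l - 1) div 2}"
  defines "L \<equiv> {S \<union> {l+1..n} | S. S \<subseteq> {1..l} \<and> card S \<ge> (l + 1) div 2}"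
  defines "F \<equiv> J \<union> K \<union> L"
  shows "induced_saturated n (antichain_carrier (k + 1)) antichain_le F
         \<and> card F = 2 ^ l + (n - l) * k
         \<and> isat n (antichain_carrier (k + 1)) antichain_le \<le> 2 ^ l + (n - l) * k"
proof -
  have half: "(l - 1) div 2 = l div 2" "(l + 1) div 2 = l div 2 + 1"
    using assms(1) by (auto elim!: oddE)
  have "l choose 1 \<le> l choose (l div 2)"
    by (rule binomial_mono) (use assms(2) in auto)
  then have "l < n" using assms(3) half by simp
  have k: "k = l choose (l div 2)" unfolding k_def half ..
  have "F = layered_family l (l div 2) n"
    unfolding F_def J_def K_def L_def half layered_family_eq_Un[OF \<open>l < n\<close>] ..
  moreover note layered_family_induced_saturated[OF \<open>l < n\<close>]
  moreover note card_layered_family[of l n "l div 2"]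
  ultimately show ?thesis
    using \<open>l < n\<close> isat_le_card unfolding k by fastforce
qed

end
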